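(* Consider the non-stationary $N$-armed stochastic bandit problem (described in the context) in a slowly-varying environment with non-stationarity parameter $\epsilon_T\le C\,T^{-\kappa}$ for some constant $C>0$ and some known $\kappa>0$. Fix $\kappa_{\max}\in(0,\tfrac43)$, let $\tilde\kappa=\min\{\kappa,\kappa_{\max}\}$ and $\rho=\frac{3\tilde\kappa}{4-3\tilde\kappa}$. Run the LM-DSEE algorithm with $a=b=1$, this $\rho$, the epoch-dependent exploration constant $\gamma=\gamma_k=2(k^\rho l)^{2/3}$ in epoch $k$ (so $L(k)=\lceil 2(k^\rho l)^{2/3}\ln(k^\rho l)\rceil$), and $l>0$ chosen so that $\lceil k^\rho l\rceil-NL(k)\ge0$ for all $k\ge1$. Then the expected cumulative regret satisfies \[ R^{\text{LM-DSEE}}(T)\in O\big(T^{\frac{3+2\rho}{3+3\rho}}\ln T\big)\quad\text{as }T\to\infty. \]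
   Context: Non-stationary stochastic MAB: there are $N$ arms. At each time $t\in\{1,\dots,T\}$ the decision-maker picks an arm $j_t$ and receives a reward $r_t$ drawn (independently of the past, given the chosen arm and time) from a distribution supported on $[0,1]$ with mean $\mu_{j_t}(t)\in[0,1]$; the means $\mu_j(t)$ are unknown and may depend on $t$. Let $\mu_{j_t^*}(t)=\max_{j}\mu_j(t)$. The expected cumulative regret of a policy is $R(T)=\sum_{t=1}^T \mathbb{E}[\mu_{j_t^*}(t)-\mu_{j_t}(t)]$, the expectation being over the randomness of the chosen arms. Slowly-varying environment: for every arm $j$ and every $t\in\{1,\dots,T-1\}$, $|\mu_j(t+1)-\mu_j(t)|\le \epsilon_T$; $\epsilon_T$ is called the non-stationarity parameter. LM-DSEE algorithm (parameters $a>0$, $b\in(0,1]$, $\rho>0$, $\gamma>0$ (possibly depending on the epoch index), $l>0$): time is divided into consecutive epochs $k=1,2,\dots$ until time $T$ is reached. Epoch $k$ consists of (i) an exploration phase: for each arm $j=1,\dots,N$, arm $j$ is played $L(k)=\lceil \gamma\ln(k^\rho l b)\rceil$ times consecutively, and $\bar r^{\,\text{epch}}_j(k)$ is the sample mean of the $L(k)$ rewards of arm $j$ collected in this exploration phase only; followed by (ii) an exploitation phase: the arm $j^{\text{epch}}_k\in\arg\max_j \bar r^{\,\text{epch}}_j(k)$ is played $\lceil a k^\rho l\rceil - N L(k)$ times. Thus epoch $k$ has length $\lceil a k^\rho l\rceil$. The hidden constant in the $O(\cdot)$ may depend on $N,\kappa,\kappa_{\max},C,l$ but not on $T$. *)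

theory Defs
  imports "HOL-Probability.Probability"
begin

text \<open>Arms are indexed 0..N-1, times 1..T. nu j t is the reward distribution of arm j
at time t (a probability measure on the reals concentrated on [0,1]).\<close>

definition reward_env :: "nat \<Rightarrow> nat \<Rightarrow> (nat \<Rightarrow> nat \<Rightarrow> real measure) \<Rightarrow> bool" where
  "reward_env N T nu \<longleftrightarrow>
     (\<forall>j<N. \<forall>t\<in>{1..T}. prob_space (nu j t) \<and> sets (nu j t) = sets borel \<and>
        (AE x in nu j t. 0 \<le> x \<and> x \<le> 1))"

definition arm_mean :: "(nat \<Rightarrow> nat \<Rightarrow> real measure) \<Rightarrow> nat \<Rightarrow> nat \<Rightarrow> real" where
  "arm_mean nu j t = (\<integral>x. x \<partial>(nu j t))"

definition slowly_varying :: "nat \<Rightarrow> nat \<Rightarrow> (nat \<Rightarrow> nat \<Rightarrow> real measure) \<Rightarrow> real \<Rightarrow> bool" where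
  "slowly_varying N T nu eps \<longleftrightarrow>
     (\<forall>j<N. \<forall>t\<in>{1..<T}. \<bar>arm_mean nu j (Suc t) - arm_mean nu j t\<bar> \<le> eps)"

text \<open>Probability space: an independent table of rewards omega (j,t) ~ nu j t;
 playing arm j at time t yields the reward omega (j,t).\<close>
definition reward_space :: "nat \<Rightarrow> nat \<Rightarrow> (nat \<Rightarrow> nat \<Rightarrow> real measure) \<Rightarrow> (nat \<times> nat \<Rightarrow> real) measure" where
  "reward_space N T nu = (\<Pi>\<^sub>M p\<in>{..<N} \<times> {1..T}. nu (fst p) (snd p))"

text \<open>Expected cumulative regret of a policy, given as the arm played at time t as a function
 of the reward table.\<close>
definition regret :: "nat \<Rightarrow> nat \<Rightarrow> (nat \<Rightarrow> nat \<Rightarrow> real measure)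
     \<Rightarrow> ((nat \<times> nat \<Rightarrow> real) \<Rightarrow> nat \<Rightarrow> nat) \<Rightarrow> real" where
  "regret N T nu pol =
     (\<Sum>t\<in>{1..T}. \<integral>\<omega>. (Max ((\<lambda>j. arm_mean nu j t) ` {..<N}) - arm_mean nu (pol \<omega> t) t)
        \<partial>(reward_space N T nu))"

definition epoch_len :: "real \<Rightarrow> real \<Rightarrow> real \<Rightarrow> nat \<Rightarrow> nat" where
  "epoch_len a \<rho> l k = nat \<lceil>a * real k powr \<rho> * l\<rceil>"

definition expl_len :: "real \<Rightarrow> real \<Rightarrow> (nat \<Rightarrow> real) \<Rightarrow> real \<Rightarrow> nat \<Rightarrow> nat" where
  "expl_len b \<rho> \<gamma> l k = nat \<lceil>\<gamma> k * ln (real k powr \<rho> * l * b)\<rceil>"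

text \<open>First time step of epoch k (k >= 1); time starts at 1.\<close>
definition epoch_start :: "real \<Rightarrow> real \<Rightarrow> real \<Rightarrow> nat \<Rightarrow> nat" where
  "epoch_start a \<rho> l k = 1 + (\<Sum>i\<in>{1..<k}. epoch_len a \<rho> l i)"

definition epoch_of :: "real \<Rightarrow> real \<Rightarrow> real \<Rightarrow> nat \<Rightarrow> nat" where
  "epoch_of a \<rho> l t = (LEAST k. 1 \<le> k \<and> t < epoch_start a \<rho> l (Suc k))"

text \<open>Sample mean of arm j over its L(k) exploration rewards in epoch k
 (arm j is explored at times start(k) + j L(k) + i, i < L(k)).\<close>
definition expl_mean :: "real \<Rightarrow> real \<Rightarrow> real \<Rightarrow> (nat \<Rightarrow> real) \<Rightarrow> real
     \<Rightarrow> (nat \<times> nat \<Rightarrow> real) \<Rightarrow> nat \<Rightarrow> nat \<Rightarrow> real" where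
  "expl_mean a b \<rho> \<gamma> l \<omega> k j =
     (let L = expl_len b \<rho> \<gamma> l k; s = epoch_start a \<rho> l k in
      (\<Sum>i<L. \<omega> (j, s + j * L + i)) / real L)"

definition exploit_arm :: "nat \<Rightarrow> real \<Rightarrow> real \<Rightarrow> real \<Rightarrow> (nat \<Rightarrow> real) \<Rightarrow> real
     \<Rightarrow> (nat \<times> nat \<Rightarrow> real) \<Rightarrow> nat \<Rightarrow> nat" where
  "exploit_arm N a b \<rho> \<gamma> l \<omega> k =
     (LEAST j. j < N \<and> (\<forall>j'<N. expl_mean a b \<rho> \<gamma> l \<omega> k j' \<le> expl_mean a b \<rho> \<gamma> l \<omega> k j))"

definition lmdsee :: "nat \<Rightarrow> real \<Rightarrow> real \<Rightarrow> real \<Rightarrow> (nat \<Rightarrow> real) \<Rightarrow> real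
     \<Rightarrow> (nat \<times> nat \<Rightarrow> real) \<Rightarrow> nat \<Rightarrow> nat" where
  "lmdsee N a b \<rho> \<gamma> l \<omega> t =
     (let k = epoch_of a \<rho> l t; m = t - epoch_start a \<rho> l k; L = expl_len b \<rho> \<gamma> l k in
      if m < N * L then m div L else exploit_arm N a b \<rho> \<gamma> l \<omega> k)"

end

(*
  In epoch k, of length E_k ~ k^rho l, every arm is sampled L_k ~ 2 E_k^(2/3) ln E_k times and the
  empirically best arm is played for the rest of the epoch. Exploration costs at most N L_k. In the
  exploitation phase the chosen arm loses at most twice the sampling error of the empirical means plus
  twice the drift eps E_k of the true means within the epoch; by independence the sampling error of
  one arm has mean at most 1/sqrt L_k. Hence epoch k costs O(N L_k + E_k (N / sqrt L_k + eps E_k)).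
  About K ~ T^(1/(1+rho)) epochs fit into T steps, so exploration and estimation together cost
  O(K^(1+2rho/3) ln T) = O(T^((3+2rho)/(3+3rho)) ln T), and drift costs O(T^-kappa K^(1+2rho)),
  which is of the same order exactly when 4 rho <= 3 kappa (1 + rho), the condition met by the
  choice of rho in the theorem.
*)
theory Submission
  imports Defs
begin

section \<open>Centred sums of independent bounded coordinates\<close>

lemma (in prob_space) expectation_abs_le_sqrt_expectation_square:
  fixes X :: "'a \<Rightarrow> real"
  assumes "integrable M X" "integrable M (\<lambda>x. (X x)\<^sup>2)"
  shows "expectation (\<lambda>x. \<bar>X x\<bar>) \<le> sqrt (expectation (\<lambda>x. (X x)\<^sup>2))"
proof -
  have "variance (\<lambda>x. \<bar>X x\<bar>) = expectation (\<lambda>x. (X x)\<^sup>2) - (expectation (\<lambda>x. \<bar>X x\<bar>))\<^sup>2"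
    using assms by (subst variance_eq) auto
  then have "(expectation (\<lambda>x. \<bar>X x\<bar>))\<^sup>2 \<le> expectation (\<lambda>x. (X x)\<^sup>2)"
    using variance_positive[of "\<lambda>x. \<bar>X x\<bar>"] by linarith
  then show ?thesis by (rule real_le_rsqrt)
qed

locale unit_interval_product =
  fixes I :: "'i set" and Q :: "'i \<Rightarrow> real measure"
  assumes finite_I: "finite I"
    and prob_space_Q: "i \<in> I \<Longrightarrow> prob_space (Q i)"
    and sets_Q: "i \<in> I \<Longrightarrow> sets (Q i) = sets borel"
    and AE_Q: "i \<in> I \<Longrightarrow> AE x in Q i. 0 \<le> x \<and> x \<le> 1"
begin

definition mean :: "'i \<Rightarrow> real" where
  "mean i = (\<integral>x. x \<partial>Q i)"

text \<open>The product-measure library needs factors at every index; pad with a point mass.\<close>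
definition Q_padded :: "'i \<Rightarrow> real measure" where
  "Q_padded i = (if i \<in> I then Q i else return borel 0)"

lemma PiM_Q_padded: "PiM I Q = PiM I Q_padded"
  unfolding Q_padded_def by (rule PiM_cong) auto

lemma prob_space_Q_padded: "prob_space (Q_padded i)"
  using prob_space_Q by (simp add: Q_padded_def prob_space_return)

lemma product_sigma_finite_Q_padded: "product_sigma_finite Q_padded"
  unfolding product_sigma_finite_def using prob_space_Q_padded prob_space_imp_sigma_finite by blast

lemma prob_space_PiM: "prob_space (PiM I Q)"
  unfolding PiM_Q_padded by (rule prob_space_PiM) (rule prob_space_Q_padded)

lemma integrable_Q_bounded:
  assumes i: "i \<in> I" and f: "f \<in> borel_measurable borel" and bnd: "\<And>x. 0 \<le> x \<Longrightarrow> x \<le> 1 \<Longrightarrow> \<bar>f x\<bar> \<le> B"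
  shows "integrable (Q i) (f :: real \<Rightarrow> real)"
proof -
  interpret prob_space "Q i" using i by (rule prob_space_Q)
  show ?thesis
    by (rule integrable_const_bound[where B=B])
       (use AE_Q[OF i] bnd in \<open>auto simp: measurable_cong_sets[OF sets_Q[OF i] refl] f\<close>)
qed

lemma mean_bounds: "i \<in> I \<Longrightarrow> 0 \<le> mean i \<and> mean i \<le> 1"
proof -
  assume i: "i \<in> I"
  interpret prob_space "Q i" using i by (rule prob_space_Q)
  have "integrable (Q i) (\<lambda>x. x)" using i by (rule integrable_Q_bounded) auto
  then show ?thesis
    unfolding mean_def using AE_Q[OF i] integral_mono_AE[of "Q i" "\<lambda>x. x" "\<lambda>_. 1"]
    by (auto intro!: integral_nonneg_AE simp: prob_space)
qed

lemma integral_PiM_prod: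
  fixes f :: "'i \<Rightarrow> real \<Rightarrow> real"
  assumes J: "J \<subseteq> I" and f: "\<And>j. j \<in> J \<Longrightarrow> integrable (Q j) (f j)"
  shows "integrable (PiM I Q) (\<lambda>\<omega>. \<Prod>j\<in>J. f j (\<omega> j))"
    and "(\<integral>\<omega>. (\<Prod>j\<in>J. f j (\<omega> j)) \<partial>PiM I Q) = (\<Prod>j\<in>J. \<integral>x. f j x \<partial>Q j)"
proof -
  define g where "g j = (if j \<in> J then f j else (\<lambda>_. 1 :: real))" for j
  have g: "integrable (Q_padded j) (g j)" for j
  proof -
    interpret prob_space "Q_padded j" by (rule prob_space_Q_padded)
    show ?thesis
    proof (cases "j \<in> J")
      case True
      then show ?thesis using f J by (auto simp: g_def Q_padded_def)
    qed (simp add: g_def)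
  qed
  have restrict: "(\<Prod>j\<in>I. g j (\<omega> j)) = (\<Prod>j\<in>J. f j (\<omega> j))" for \<omega>
    using finite_I J by (intro prod.mono_neutral_cong_right) (auto simp: g_def)
  have "(\<Prod>j\<in>I. \<integral>x. g j x \<partial>Q_padded j) = (\<Prod>j\<in>J. \<integral>x. f j x \<partial>Q j)"
  proof -
    have "(\<integral>x. g j x \<partial>Q_padded j) = (if j \<in> J then \<integral>x. f j x \<partial>Q j else 1)" if "j \<in> I" for j
      using that J prob_space_Q[OF that] by (auto simp: g_def Q_padded_def prob_space.prob_space)
    then show ?thesis using finite_I J by (simp add: prod.If_cases Int_absorb1 cong: prod.cong)
  qed
  then show "integrable (PiM I Q) (\<lambda>\<omega>. \<Prod>j\<in>J. f j (\<omega> j))"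
    and "(\<integral>\<omega>. (\<Prod>j\<in>J. f j (\<omega> j)) \<partial>PiM I Q) = (\<Prod>j\<in>J. \<integral>x. f j x \<partial>Q j)"
    using product_sigma_finite.product_integrable_prod[OF product_sigma_finite_Q_padded finite_I g]
      product_sigma_finite.product_integral_prod[OF product_sigma_finite_Q_padded finite_I g]
    unfolding PiM_Q_padded restrict by simp_all
qed

lemma integral_Q_centred:
  assumes i: "i \<in> I"
  shows "(\<integral>x. x - mean i \<partial>Q i) = 0"
proof -
  interpret prob_space "Q i" using i by (rule prob_space_Q)
  have "integrable (Q i) (\<lambda>x. x)" using i by (rule integrable_Q_bounded) auto
  then show ?thesis by (simp add: mean_def prob_space)
qed

lemma integral_Q_centred_square_le:
  assumes i: "i \<in> I"
  shows "(\<integral>x. (x - mean i)\<^sup>2 \<partial>Q i) \<le> 1"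
proof -
  interpret prob_space "Q i" using i by (rule prob_space_Q)
  have bnd: "(x - mean i)\<^sup>2 \<le> 1" if "0 \<le> x" "x \<le> 1" for x
    using mean_bounds[OF i] that by (intro abs_square_le_1[THEN iffD2]) auto
  have "(\<integral>x. (x - mean i)\<^sup>2 \<partial>Q i) \<le> (\<integral>x. 1 \<partial>Q i)"
    using AE_Q[OF i] bnd by (intro integral_mono_AE integrable_Q_bounded[OF i]) auto
  then show ?thesis by (simp add: prob_space)
qed

lemma integrable_Q_centred:
  assumes "i \<in> I"
  shows "integrable (Q i) (\<lambda>x. x - mean i)" "integrable (Q i) (\<lambda>x. (x - mean i)\<^sup>2)"
  using assms mean_bounds[OF assms]
  by (auto intro!: integrable_Q_bounded[where B = 1] abs_square_le_1[THEN iffD2])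

lemma integral_centred_product_le:
  assumes "a \<in> I" "b \<in> I"
  shows "integrable (PiM I Q) (\<lambda>\<omega>. (\<omega> a - mean a) * (\<omega> b - mean b))"
    and "(\<integral>\<omega>. (\<omega> a - mean a) * (\<omega> b - mean b) \<partial>PiM I Q) \<le> (if a = b then 1 else 0)"
proof -
  have "integrable (PiM I Q) (\<lambda>\<omega>. (\<omega> a - mean a) * (\<omega> b - mean b))
    \<and> (\<integral>\<omega>. (\<omega> a - mean a) * (\<omega> b - mean b) \<partial>PiM I Q) \<le> (if a = b then 1 else 0)"
  proof (cases "a = b")
    case True
    then show ?thesis
      using integral_PiM_prod[of "{a}" "\<lambda>j x. (x - mean j)\<^sup>2"] integral_Q_centred_square_le[of a]
        assms integrable_Q_centred by (auto simp: power2_eq_square)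
  next
    case False
    have ab: "{a, b} \<subseteq> I" using assms by auto
    then have "integrable (Q j) (\<lambda>x. x - mean j)" if "j \<in> {a, b}" for j
      using that integrable_Q_centred by auto
    then show ?thesis
      using False integral_PiM_prod[OF ab, of "\<lambda>j x. x - mean j"] integral_Q_centred[of a] ab by auto
  qed
  then show "integrable (PiM I Q) (\<lambda>\<omega>. (\<omega> a - mean a) * (\<omega> b - mean b))"
    and "(\<integral>\<omega>. (\<omega> a - mean a) * (\<omega> b - mean b) \<partial>PiM I Q) \<le> (if a = b then 1 else 0)" by auto
qed

lemma integral_centred_sum_abs_le:
  assumes S: "S \<subseteq> I"
  shows "integrable (PiM I Q) (\<lambda>\<omega>. \<bar>\<Sum>i\<in>S. \<omega> i - mean i\<bar>)"
    and "(\<integral>\<omega>. \<bar>\<Sum>i\<in>S. \<omega> i - mean i\<bar> \<partial>PiM I Q) \<le> sqrt (card S)"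
proof -
  interpret P: prob_space "PiM I Q" by (rule prob_space_PiM)
  have fin: "finite S" using S finite_I by (rule finite_subset)
  note cross = integral_centred_product_le[OF subsetD[OF S] subsetD[OF S]]
  have square: "(\<Sum>i\<in>S. \<omega> i - mean i)\<^sup>2 = (\<Sum>a\<in>S. \<Sum>b\<in>S. (\<omega> a - mean a) * (\<omega> b - mean b))" for \<omega>
    by (simp add: power2_eq_square sum_product)
  have int_square: "integrable (PiM I Q) (\<lambda>\<omega>. (\<Sum>i\<in>S. \<omega> i - mean i)\<^sup>2)"
    unfolding square using cross by auto
  have "(\<integral>\<omega>. (\<Sum>i\<in>S. \<omega> i - mean i)\<^sup>2 \<partial>PiM I Q)
      = (\<Sum>a\<in>S. \<Sum>b\<in>S. \<integral>\<omega>. (\<omega> a - mean a) * (\<omega> b - mean b) \<partial>PiM I Q)"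
    unfolding square using cross by (simp add: Bochner_Integration.integral_sum Bochner_Integration.integrable_sum)
  also have "\<dots> \<le> (\<Sum>a\<in>S. \<Sum>b\<in>S. if a = b then 1 else 0)"
    using cross by (intro sum_mono) auto
  also have "\<dots> = card S" using fin by simp
  finally have second_moment: "(\<integral>\<omega>. (\<Sum>i\<in>S. \<omega> i - mean i)\<^sup>2 \<partial>PiM I Q) \<le> card S" .
  have "integrable (PiM I Q) (\<lambda>\<omega>. \<omega> i - mean i)" if "i \<in> S" for i
    using integral_PiM_prod(1)[of "{i}" "\<lambda>j x. x - mean j"] that S integrable_Q_centred by auto
  then have int_sum: "integrable (PiM I Q) (\<lambda>\<omega>. \<Sum>i\<in>S. \<omega> i - mean i)" by auto
  then show "integrable (PiM I Q) (\<lambda>\<omega>. \<bar>\<Sum>i\<in>S. \<omega> i - mean i\<bar>)" by (rule integrable_abs)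
  show "(\<integral>\<omega>. \<bar>\<Sum>i\<in>S. \<omega> i - mean i\<bar> \<partial>PiM I Q) \<le> sqrt (card S)"
    using P.expectation_abs_le_sqrt_expectation_square[OF int_sum int_square] second_moment
    by (meson order_trans real_sqrt_le_mono)
qed

end

section \<open>The epoch schedule\<close>

lemma half_sum_powr_le:
  fixes \<rho> :: real and n :: nat
  assumes "0 \<le> \<rho>"
  shows "(real n / 2) powr (\<rho> + 1) \<le> (\<Sum>i\<in>{1..n}. real i powr \<rho>)"
proof -
  let ?H = "{n div 2 + 1..n}"
  have "(real n / 2) powr (\<rho> + 1) = (real n / 2) * (real n / 2) powr \<rho>"
    by (cases "n = 0") (simp_all add: powr_add)
  also have "\<dots> \<le> real (card ?H) * (real n / 2) powr \<rho>"
    by (intro mult_right_mono) auto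
  also have "\<dots> = (\<Sum>i\<in>?H. (real n / 2) powr \<rho>)" by simp
  also have "\<dots> \<le> (\<Sum>i\<in>?H. real i powr \<rho>)"
    using assms by (intro sum_mono powr_mono2) auto
  also have "\<dots> \<le> (\<Sum>i\<in>{1..n}. real i powr \<rho>)"
    by (intro sum_mono2) auto
  finally show ?thesis .
qed

locale lmdsee_schedule =
  fixes N :: nat and a b \<rho> l :: real and \<gamma> :: "nat \<Rightarrow> real"
  assumes N_pos: "N \<ge> 1" and a_pos: "a > 0" and rho_nonneg: "\<rho> \<ge> 0" and l_pos: "l > 0"
begin

abbreviation "len \<equiv> epoch_len a \<rho> l"
abbreviation "start \<equiv> epoch_start a \<rho> l"
abbreviation "epoch \<equiv> epoch_of a \<rho> l"
abbreviation "expl \<equiv> expl_len b \<rho> \<gamma> l"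
abbreviation "policy \<equiv> lmdsee N a b \<rho> \<gamma> l"

lemma epoch_len_ge: "real i powr \<rho> * l * a \<le> len i"
  unfolding epoch_len_def by (simp add: mult_ac) linarith

lemma epoch_len_pos: "k \<ge> 1 \<Longrightarrow> len k \<ge> 1"
proof -
  assume "k \<ge> 1"
  then have "0 < a * real k powr \<rho> * l" using a_pos l_pos by simp
  then show ?thesis unfolding epoch_len_def by linarith
qed

lemma epoch_start_Suc: "k \<ge> 1 \<Longrightarrow> start (Suc k) = start k + len k"
  by (simp add: epoch_start_def)

lemma epoch_start_ge: "k \<ge> 1 \<Longrightarrow> k \<le> start k"
proof (induction k rule: dec_induct)
  case base then show ?case by (simp add: epoch_start_def)
next
  case (step n) then show ?case using epoch_start_Suc[of n] epoch_len_pos[of n] by simp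
qed

lemma epoch_start_mono:
  assumes "1 \<le> k" "k \<le> k'"
  shows "start k \<le> start k'"
  using assms(2) by (induction k' rule: dec_induct) (use assms(1) in \<open>auto simp: epoch_start_Suc\<close>)

lemma epoch_of_bounds:
  assumes "t \<ge> 1"
  shows "1 \<le> epoch t" "start (epoch t) \<le> t" "t < start (Suc (epoch t))"
proof -
  let ?P = "\<lambda>k. 1 \<le> k \<and> t < start (Suc k)"
  have "?P t" using epoch_start_ge[of "Suc t"] assms by simp
  then have P: "?P (epoch t)" unfolding epoch_of_def by (rule LeastI)
  then show "1 \<le> epoch t" "t < start (Suc (epoch t))" by auto
  show "start (epoch t) \<le> t"
  proof (cases "epoch t = 1")
    case True then show ?thesis using assms by (simp add: epoch_start_def)
  next
    case False
    then have "1 \<le> epoch t - 1" using P by auto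
    moreover have "\<not> ?P (epoch t - 1)"
      using P False not_less_Least[of "epoch t - 1" ?P] unfolding epoch_of_def by auto
    ultimately show ?thesis using P by (simp add: not_less)
  qed
qed

lemma epoch_of_eqI:
  assumes "1 \<le> k" "start k \<le> t" "t < start (Suc k)"
  shows "epoch t = k"
  unfolding epoch_of_def
proof (rule Least_equality)
  fix k' assume k': "1 \<le> k' \<and> t < start (Suc k')"
  show "k \<le> k'"
  proof (rule ccontr)
    assume "\<not> k \<le> k'"
    then show False using k' assms epoch_start_mono[of "Suc k'" k] by simp
  qed
qed (use assms in simp)

text \<open>The first \<open>K - 1\<close> epochs fit before \<open>T\<close> and have total length at least
  \<open>a l \<Sum>i<K. i powr \<rho> \<ge> a l ((K - 1)/2) powr (1 + \<rho>)\<close>.\<close>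
lemma epoch_of_le:
  assumes T: "T \<ge> 1"
  shows "real (epoch T) \<le> (1 + 2 / (a * l) powr (1 / (1 + \<rho>))) * real T powr (1 / (1 + \<rho>))"
proof -
  define K q where "K = epoch T" and "q = 1 / (1 + \<rho>)"
  have K: "1 \<le> K" "start K \<le> T" using epoch_of_bounds[OF T] by (simp_all add: K_def)
  have q: "q > 0" "(\<rho> + 1) * q = 1" using rho_nonneg by (simp_all add: q_def)
  have "a * l * (\<Sum>i\<in>{1..K - 1}. real i powr \<rho>) \<le> (\<Sum>i\<in>{1..<K}. real (len i))"
    using K epoch_len_ge by (auto simp: sum_distrib_left mult_ac atLeastLessThanSuc_atLeastAtMost[symmetric]
        intro!: sum_mono)
  also have "\<dots> \<le> T" using K(2) by (simp add: epoch_start_def flip: of_nat_sum)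
  finally have "a * l * (real (K - 1) / 2) powr (\<rho> + 1) \<le> T"
    using half_sum_powr_le[OF rho_nonneg, of "K - 1"] a_pos l_pos
    by (meson mult_left_mono order_trans mult_pos_pos less_imp_le)
  then have "(real (K - 1) / 2) powr (\<rho> + 1) \<le> T / (a * l)"
    using a_pos l_pos by (simp add: field_simps)
  then have "((real (K - 1) / 2) powr (\<rho> + 1)) powr q \<le> (T / (a * l)) powr q"
    using q by (intro powr_mono2) auto
  then have "real (K - 1) / 2 \<le> T powr q / (a * l) powr q"
    using q by (simp add: powr_powr powr_divide)
  moreover have "1 \<le> T powr q" using T q by (simp add: ge_one_powr_ge_zero)
  moreover have "real K = real (K - 1) + 1" using K by simp
  ultimately have "real K \<le> T powr q + 2 * (T powr q / (a * l) powr q)" by linarith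
  then show ?thesis by (simp add: K_def q_def field_simps)
qed

lemma epoch_of_le_self: "T \<ge> 1 \<Longrightarrow> epoch T \<le> T"
  using epoch_of_bounds[of T] epoch_start_ge[of "epoch T"] by linarith

lemma sum_over_epochs:
  "(\<Sum>t\<in>{1..<start (Suc n)}. f t) = (\<Sum>k\<in>{1..n}. \<Sum>t\<in>{start k..<start (Suc k)}. f t)"
proof (induction n)
  case 0 then show ?case by (simp add: epoch_start_def)
next
  case (Suc n)
  have "1 \<le> start (Suc n)" "start (Suc n) \<le> start (Suc (Suc n))"
    using epoch_start_ge[of "Suc n"] epoch_start_Suc[of "Suc n"] by auto
  then have "(\<Sum>t\<in>{1..<start (Suc (Suc n))}. f t)
      = (\<Sum>t\<in>{1..<start (Suc n)}. f t) + (\<Sum>t\<in>{start (Suc n)..<start (Suc (Suc n))}. f t)"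
    by (rule sum.atLeastLessThan_concat[symmetric])
  then show ?case using Suc by simp
qed

lemma exploit_arm_max:
  shows "exploit_arm N a b \<rho> \<gamma> l \<omega> k < N"
    and "j < N \<Longrightarrow> expl_mean a b \<rho> \<gamma> l \<omega> k j \<le> expl_mean a b \<rho> \<gamma> l \<omega> k (exploit_arm N a b \<rho> \<gamma> l \<omega> k)"
proof -
  let ?f = "expl_mean a b \<rho> \<gamma> l \<omega> k"
  have "0 \<in> {..<N}" using N_pos by simp
  then have ne: "?f ` {..<N} \<noteq> {}" by blast
  obtain i where "i < N" "?f i = Max (?f ` {..<N})" using Max_in[OF _ ne] by auto
  then have "i < N \<and> (\<forall>j'<N. ?f j' \<le> ?f i)" by simp
  then have "exploit_arm N a b \<rho> \<gamma> l \<omega> k < N \<and> (\<forall>j'<N. ?f j' \<le> ?f (exploit_arm N a b \<rho> \<gamma> l \<omega> k))"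
    unfolding exploit_arm_def by (rule LeastI)
  then show "exploit_arm N a b \<rho> \<gamma> l \<omega> k < N"
    and "j < N \<Longrightarrow> ?f j \<le> ?f (exploit_arm N a b \<rho> \<gamma> l \<omega> k)" by auto
qed

lemma lmdsee_less: "policy \<omega> t < N"
proof (cases "t - start (epoch t) < N * expl (epoch t)")
  case True
  then have "(t - start (epoch t)) div expl (epoch t) < N"
    by (cases "expl (epoch t) = 0") (auto simp: div_less_iff_less_mult mult.commute)
  with True show ?thesis by (simp add: lmdsee_def Let_def)
qed (simp add: lmdsee_def Let_def exploit_arm_max)

lemma lmdsee_exploit:
  "N * expl (epoch t) \<le> t - start (epoch t) \<Longrightarrow> policy \<omega> t = exploit_arm N a b \<rho> \<gamma> l \<omega> (epoch t)"
  by (simp add: lmdsee_def Let_def)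

end

section \<open>Regret of one epoch\<close>

text \<open>A non-integrable \<open>f\<close> has Bochner integral \<open>0\<close>, so \<open>f\<close> need not be shown integrable
  (or even measurable).\<close>
lemma integral_le_nonneg_integrable:
  fixes f g :: "'a \<Rightarrow> real"
  assumes "integrable M g" "\<And>x. x \<in> space M \<Longrightarrow> f x \<le> g x" "\<And>x. x \<in> space M \<Longrightarrow> 0 \<le> g x"
  shows "integral\<^sup>L M f \<le> integral\<^sup>L M g"
proof (cases "integrable M f")
  case True then show ?thesis using assms by (intro integral_mono) auto
next
  case False then show ?thesis using assms by (simp add: not_integrable_integral_eq integral_nonneg_AE)
qed

text \<open>An epoch of length \<open>E\<close> with \<open>L\<close> exploration samples per arm costs at most one unit per
  exploration step and \<open>2N/\<surd>L + 2\<epsilon>E\<close> per exploitation step.\<close>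
definition epoch_regret_bound :: "nat \<Rightarrow> real \<Rightarrow> nat \<Rightarrow> nat \<Rightarrow> real" where
  "epoch_regret_bound N eps E L =
    real N * real L + real E * (if L = 0 then 1 else 2 * real N / sqrt (real L) + 2 * eps * real E)"

lemma sum_lessThan_if_less_le:
  fixes D :: real
  assumes "0 \<le> D"
  shows "(\<Sum>m<E. if m < c then 1 else D) \<le> real c + real E * D"
proof -
  have "(\<Sum>m<E. if m < c then 1 else D) \<le> (\<Sum>m<E. (if m < c then 1 else 0) + D)"
    using assms by (intro sum_mono) auto
  also have "\<dots> = card {m. m < E \<and> m < c} + E * D"
    by (simp add: sum.distrib sum.If_cases lessThan_def Collect_conj_eq)
  also have "\<dots> \<le> c + E * D"
    using card_mono[of "{..<c}" "{m. m < E \<and> m < c}"] by fastforce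
  finally show ?thesis .
qed

locale lmdsee_run = lmdsee_schedule +
  fixes T :: nat and nu :: "nat \<Rightarrow> nat \<Rightarrow> real measure" and eps :: real
  assumes env: "reward_env N T nu" and slow: "slowly_varying N T nu eps" and eps_nonneg: "eps \<ge> 0"
begin

abbreviation "\<mu> \<equiv> arm_mean nu"
abbreviation "M \<equiv> reward_space N T nu"

sublocale rewards: unit_interval_product "{..<N} \<times> {1..T}" "\<lambda>p. nu (fst p) (snd p)"
proof (rule unit_interval_product.intro)
  fix p assume "p \<in> {..<N} \<times> {1..T}"
  then have "fst p < N" "snd p \<in> {1..T}" by auto
  then show "prob_space (nu (fst p) (snd p))" "sets (nu (fst p) (snd p)) = sets borel"
    "AE x in nu (fst p) (snd p). 0 \<le> x \<and> x \<le> 1"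
    using env unfolding reward_env_def by blast+
qed simp

lemma prob_space_M: "prob_space M"
  unfolding reward_space_def by (rule rewards.prob_space_PiM)

lemma arm_mean_bounds: "j < N \<Longrightarrow> t \<in> {1..T} \<Longrightarrow> 0 \<le> \<mu> j t \<and> \<mu> j t \<le> 1"
  using rewards.mean_bounds[of "(j, t)"] by (simp add: rewards.mean_def arm_mean_def)

lemma arm_mean_drift:
  assumes j: "j < N" and t: "t \<in> {1..T}" and \<tau>: "\<tau> \<in> {1..T}"
  shows "\<bar>\<mu> j \<tau> - \<mu> j t\<bar> \<le> eps * \<bar>real \<tau> - real t\<bar>"
proof -
  have up: "\<bar>\<mu> j (s + d) - \<mu> j s\<bar> \<le> eps * d" if "1 \<le> s" "s + d \<le> T" for s d
    using that
  proof (induction d)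
    case (Suc d)
    have "\<bar>\<mu> j (Suc (s + d)) - \<mu> j (s + d)\<bar> \<le> eps"
      using slow j Suc.prems unfolding slowly_varying_def by auto
    then show ?case using Suc by (simp add: algebra_simps)
  qed simp
  show ?thesis
  proof (cases "t \<le> \<tau>")
    case True
    then show ?thesis using up[of t "\<tau> - t"] t \<tau> by simp
  next
    case False
    then show ?thesis using up[of \<tau> "t - \<tau>"] t \<tau> by (simp add: abs_minus_commute)
  qed
qed

definition best_mean :: "nat \<Rightarrow> real" where
  "best_mean t = Max ((\<lambda>j. \<mu> j t) ` {..<N})"

lemma best_mean_attained: "\<exists>j<N. \<mu> j t = best_mean t"
proof -
  have "0 \<in> {..<N}" using N_pos by simp
  then have "best_mean t \<in> (\<lambda>j. \<mu> j t) ` {..<N}"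
    unfolding best_mean_def by (intro Max_in) auto
  then show ?thesis by auto
qed

definition instant_regret :: "nat \<Rightarrow> real" where
  "instant_regret t = (\<integral>\<omega>. best_mean t - \<mu> (policy \<omega> t) t \<partial>M)"

lemma regret_eq_sum_instant_regret: "regret N T nu policy = (\<Sum>t\<in>{1..T}. instant_regret t)"
  by (simp add: regret_def instant_regret_def best_mean_def)

lemma instant_regret_le_1:
  assumes t: "t \<in> {1..T}"
  shows "instant_regret t \<le> 1"
proof -
  interpret prob_space M by (rule prob_space_M)
  obtain j where j: "j < N" "\<mu> j t = best_mean t" using best_mean_attained by blast
  have "best_mean t - \<mu> (policy \<omega> t) t \<le> 1" for \<omega>
    using arm_mean_bounds[OF j(1) t] arm_mean_bounds[OF lmdsee_less[of \<omega> t] t] j(2) by linarith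
  then have "instant_regret t \<le> (\<integral>\<omega>. 1 \<partial>M)"
    unfolding instant_regret_def by (intro integral_le_nonneg_integrable) auto
  then show ?thesis by (simp add: prob_space)
qed

definition expl_time :: "nat \<Rightarrow> nat \<Rightarrow> nat \<Rightarrow> nat" where
  "expl_time k j i = start k + j * expl k + i"

definition expl_deviation :: "(nat \<times> nat \<Rightarrow> real) \<Rightarrow> nat \<Rightarrow> nat \<Rightarrow> real" where
  "expl_deviation \<omega> k j = (\<Sum>i<expl k. \<omega> (j, expl_time k j i) - \<mu> j (expl_time k j i))"

lemma expl_time_bounds:
  assumes "j < N" "i < expl k"
  shows "start k \<le> expl_time k j i" "expl_time k j i < start k + N * expl k"
proof -
  have "j * expl k + i < Suc j * expl k" using assms by simp
  also have "\<dots> \<le> N * expl k" using assms by (intro mult_right_mono) auto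
  finally show "expl_time k j i < start k + N * expl k" by (simp add: expl_time_def)
qed (simp add: expl_time_def)

lemma integral_expl_deviation_le:
  assumes k: "k \<ge> 1" and j: "j < N" and T: "start k + N * expl k \<le> T"
  shows "integrable M (\<lambda>\<omega>. \<bar>expl_deviation \<omega> k j\<bar>)"
    and "(\<integral>\<omega>. \<bar>expl_deviation \<omega> k j\<bar> \<partial>M) \<le> sqrt (expl k)"
proof -
  define S where "S = (\<lambda>i. (j, expl_time k j i)) ` {..<expl k}"
  have inj: "inj_on (\<lambda>i. (j, expl_time k j i)) {..<expl k}"
    by (auto intro: inj_onI simp: expl_time_def)
  have "start k \<ge> 1" using epoch_start_ge[OF k] k by simp
  then have "expl_time k j i \<in> {1..T}" if "i < expl k" for i
    using expl_time_bounds[OF j that] T by auto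
  then have S: "S \<subseteq> {..<N} \<times> {1..T}" using j by (auto simp: S_def)
  have card: "card S = expl k" using card_image[OF inj] by (simp add: S_def)
  have dev: "expl_deviation \<omega> k j = (\<Sum>p\<in>S. \<omega> p - rewards.mean p)" for \<omega>
    unfolding S_def sum.reindex[OF inj] expl_deviation_def
    by (simp add: rewards.mean_def arm_mean_def)
  show "integrable M (\<lambda>\<omega>. \<bar>expl_deviation \<omega> k j\<bar>)"
    using rewards.integral_centred_sum_abs_le(1)[OF S] unfolding dev reward_space_def .
  show "(\<integral>\<omega>. \<bar>expl_deviation \<omega> k j\<bar> \<partial>M) \<le> sqrt (expl k)"
    using rewards.integral_centred_sum_abs_le(2)[OF S] unfolding dev reward_space_def card .
qed

lemma expl_mean_close:
  assumes k: "k \<ge> 1" and j: "j < N" and L: "expl k \<ge> 1" and t: "t \<le> T"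
    and expl_done: "start k + N * expl k \<le> t" and t_epoch: "t < start (Suc k)"
  shows "\<bar>expl_mean a b \<rho> \<gamma> l \<omega> k j - \<mu> j t\<bar> \<le> \<bar>expl_deviation \<omega> k j\<bar> / expl k + eps * len k"
proof -
  let ?L = "expl k" and ?\<tau> = "expl_time k j"
  have "start k \<ge> 1" using epoch_start_ge[OF k] k by simp
  then have \<tau>: "?\<tau> i \<in> {1..T}" "\<bar>real (?\<tau> i) - real t\<bar> \<le> len k" if "i < ?L" for i
    using expl_time_bounds[OF j that] expl_done t t_epoch epoch_start_Suc[OF k] by auto
  have "1 \<le> t" using \<open>start k \<ge> 1\<close> expl_done by simp
  then have drift: "\<bar>\<mu> j (?\<tau> i) - \<mu> j t\<bar> \<le> eps * len k" if "i < ?L" for i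
    using arm_mean_drift[OF j _ \<tau>(1)[OF that]] \<tau>(2)[OF that] t eps_nonneg
    by (meson atLeastAtMost_iff mult_left_mono order_trans)
  have mean: "expl_mean a b \<rho> \<gamma> l \<omega> k j = (\<Sum>i<?L. \<omega> (j, ?\<tau> i)) / ?L"
    by (simp add: expl_mean_def expl_time_def Let_def)
  have "(\<Sum>i<?L. \<omega> (j, ?\<tau> i)) = expl_deviation \<omega> k j + (\<Sum>i<?L. \<mu> j (?\<tau> i))"
    by (simp add: expl_deviation_def sum_subtractf)
  moreover have "(\<Sum>i<?L. \<mu> j (?\<tau> i) - \<mu> j t) = (\<Sum>i<?L. \<mu> j (?\<tau> i)) - ?L * \<mu> j t"
    by (simp add: sum_subtractf)
  ultimately have split: "expl_mean a b \<rho> \<gamma> l \<omega> k j - \<mu> j t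
      = expl_deviation \<omega> k j / ?L + (\<Sum>i<?L. \<mu> j (?\<tau> i) - \<mu> j t) / ?L"
    unfolding mean using L by (simp add: diff_divide_distrib add_divide_distrib)
  have "\<bar>\<Sum>i<?L. \<mu> j (?\<tau> i) - \<mu> j t\<bar> \<le> (\<Sum>i<?L. eps * len k)"
    using drift by (intro order_trans[OF sum_abs sum_mono]) auto
  then have "\<bar>(\<Sum>i<?L. \<mu> j (?\<tau> i) - \<mu> j t) / ?L\<bar> \<le> eps * len k"
    using L by (simp add: divide_le_eq mult_ac)
  moreover have "\<bar>expl_deviation \<omega> k j / ?L\<bar> = \<bar>expl_deviation \<omega> k j\<bar> / ?L"
    by simp
  ultimately show ?thesis
    unfolding split using abs_triangle_ineq by (smt (verit))
qed

lemma exploit_regret_le: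
  assumes t: "t \<in> {1..T}" and L: "expl (epoch t) \<ge> 1"
    and expl_done: "N * expl (epoch t) \<le> t - start (epoch t)"
  shows "best_mean t - \<mu> (policy \<omega> t) t
    \<le> 2 * (\<Sum>j<N. \<bar>expl_deviation \<omega> (epoch t) j\<bar>) / expl (epoch t) + 2 * eps * len (epoch t)"
proof -
  define k where "k = epoch t"
  have k: "1 \<le> k" "start k \<le> t" "t < start (Suc k)" using epoch_of_bounds t by (auto simp: k_def)
  let ?e = "expl_mean a b \<rho> \<gamma> l \<omega> k" and ?d = "\<lambda>j. \<bar>expl_deviation \<omega> k j\<bar> / expl k"
  define J where "J = exploit_arm N a b \<rho> \<gamma> l \<omega> k"
  have J: "J < N" "policy \<omega> t = J"
    using exploit_arm_max(1) lmdsee_exploit[OF expl_done] by (simp_all add: J_def k_def)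
  obtain i where i: "i < N" "\<mu> i t = best_mean t" using best_mean_attained by blast
  have close: "\<bar>?e j - \<mu> j t\<bar> \<le> ?d j + eps * len k" if "j < N" for j
    using expl_mean_close[OF k(1) that] L t k expl_done by (simp add: k_def)
  have "?e i \<le> ?e J" using exploit_arm_max(2)[OF i(1)] by (simp add: J_def)
  then have "best_mean t - \<mu> J t \<le> ?d i + ?d J + 2 * eps * len k"
    using close[OF i(1)] close[OF J(1)] i(2) by linarith
  also have "?d i + ?d J \<le> 2 * (\<Sum>j<N. \<bar>expl_deviation \<omega> k j\<bar>) / expl k"
  proof -
    have member: "\<bar>expl_deviation \<omega> k j\<bar> \<le> (\<Sum>j<N. \<bar>expl_deviation \<omega> k j\<bar>)" if "j < N" for j
      using that by (intro member_le_sum) auto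
    have "\<bar>expl_deviation \<omega> k i\<bar> + \<bar>expl_deviation \<omega> k J\<bar> \<le> 2 * (\<Sum>j<N. \<bar>expl_deviation \<omega> k j\<bar>)"
      using member[OF i(1)] member[OF J(1)] by linarith
    then show ?thesis by (simp add: add_divide_distrib[symmetric] divide_right_mono)
  qed
  finally show ?thesis by (simp add: J(2) k_def)
qed

lemma integral_exploit_bound_le:
  assumes k: "k \<ge> 1" and L: "expl k \<ge> 1" and T: "start k + N * expl k \<le> T"
  defines "B \<equiv> \<lambda>\<omega>. 2 * (\<Sum>j<N. \<bar>expl_deviation \<omega> k j\<bar>) / expl k + 2 * eps * len k"
  shows "integrable M B" and "(\<integral>\<omega>. B \<omega> \<partial>M) \<le> 2 * real N / sqrt (expl k) + 2 * eps * len k"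
proof -
  interpret prob_space M by (rule prob_space_M)
  note dev = integral_expl_deviation_le[OF k _ T]
  have int: "integrable M (\<lambda>\<omega>. 2 * (\<Sum>j<N. \<bar>expl_deviation \<omega> k j\<bar>) / expl k)"
    using dev(1) by (intro Bochner_Integration.integrable_divide
        Bochner_Integration.integrable_mult_right Bochner_Integration.integrable_sum) auto
  then show "integrable M B" unfolding B_def by auto
  have "(\<integral>\<omega>. B \<omega> \<partial>M) = 2 * (\<Sum>j<N. \<integral>\<omega>. \<bar>expl_deviation \<omega> k j\<bar> \<partial>M) / expl k + 2 * eps * len k"
    unfolding B_def using int dev(1)
    by (simp add: Bochner_Integration.integral_add prob_space Bochner_Integration.integral_sum)
  also have "\<dots> \<le> 2 * (\<Sum>j<N. sqrt (expl k)) / expl k + 2 * eps * len k"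
    using dev(2) by (intro add_right_mono divide_right_mono mult_left_mono sum_mono) auto
  also have "2 * (\<Sum>j<N. sqrt (expl k)) / expl k = 2 * N * (sqrt (expl k) / expl k)" by simp
  also have "\<dots> = 2 * real N / sqrt (expl k)" by (subst sqrt_divide_self_eq) (auto simp: divide_inverse)
  finally show "(\<integral>\<omega>. B \<omega> \<partial>M) \<le> 2 * real N / sqrt (expl k) + 2 * eps * len k" .
qed

lemma instant_regret_exploit_le:
  assumes t: "t \<in> {1..T}" and L: "expl (epoch t) \<ge> 1"
    and expl_done: "N * expl (epoch t) \<le> t - start (epoch t)"
  shows "instant_regret t \<le> 2 * real N / sqrt (expl (epoch t)) + 2 * eps * len (epoch t)"
proof -
  have k: "1 \<le> epoch t" "start (epoch t) + N * expl (epoch t) \<le> T"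
    using epoch_of_bounds[of t] t expl_done by auto
  note bound = integral_exploit_bound_le[OF k(1) L k(2)]
  have "instant_regret t
      \<le> (\<integral>\<omega>. 2 * (\<Sum>j<N. \<bar>expl_deviation \<omega> (epoch t) j\<bar>) / expl (epoch t) + 2 * eps * len (epoch t) \<partial>M)"
    unfolding instant_regret_def using exploit_regret_le[OF assms] eps_nonneg bound(1)
    by (intro integral_le_nonneg_integrable) auto
  with bound(2) show ?thesis by linarith
qed

lemma epoch_regret_le:
  assumes k: "k \<ge> 1"
  shows "(\<Sum>t\<in>{start k..<start (Suc k)}. if t \<le> T then instant_regret t else 0)
    \<le> epoch_regret_bound N eps (len k) (expl k)"
proof -
  let ?L = "expl k" and ?E = "len k"
  define D where "D = (if ?L = 0 then 1 else 2 * real N / sqrt (real ?L) + 2 * eps * real ?E)"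
  have D: "0 \<le> D" using eps_nonneg by (simp add: D_def)
  have step: "(if start k + m \<le> T then instant_regret (start k + m) else 0) \<le> (if m < N * ?L then 1 else D)"
    if m: "m < ?E" for m
  proof (cases "start k + m \<le> T")
    case True
    then have t: "start k + m \<in> {1..T}" using epoch_start_ge[OF k] k by auto
    have "epoch (start k + m) = k" using k m epoch_start_Suc[OF k] by (intro epoch_of_eqI) auto
    then show ?thesis
      using True instant_regret_le_1[OF t] instant_regret_exploit_le[OF t] by (auto simp: D_def)
  qed (simp add: D)
  have "(\<Sum>t\<in>{start k..<start (Suc k)}. if t \<le> T then instant_regret t else 0)
      = (\<Sum>m<?E. if start k + m \<le> T then instant_regret (start k + m) else 0)"
    unfolding epoch_start_Suc[OF k] by (subst sum.atLeastLessThan_shift_0) (simp add: atLeast0LessThan)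
  also have "\<dots> \<le> (\<Sum>m<?E. if m < N * ?L then 1 else D)"
    using step by (intro sum_mono) auto
  also have "\<dots> \<le> N * ?L + ?E * D"
    using sum_lessThan_if_less_le[OF D, of "N * ?L" ?E] by simp
  finally show ?thesis by (simp add: epoch_regret_bound_def D_def)
qed

lemma regret_le_sum_epoch_regret_bound:
  assumes T: "T \<ge> 1"
  shows "regret N T nu policy \<le> (\<Sum>k\<in>{1..epoch T}. epoch_regret_bound N eps (len k) (expl k))"
proof -
  define K where "K = epoch T"
  have K: "1 \<le> K" "T < start (Suc K)" using epoch_of_bounds[OF T] by (simp_all add: K_def)
  define r where "r t = (if t \<le> T then instant_regret t else 0)" for t
  have "regret N T nu policy = (\<Sum>t\<in>{1..<start (Suc K)}. r t)"
    unfolding regret_eq_sum_instant_regret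
    by (rule sum.mono_neutral_cong_right[symmetric]) (use K in \<open>auto simp: r_def\<close>)
  also have "\<dots> = (\<Sum>k\<in>{1..K}. \<Sum>t\<in>{start k..<start (Suc k)}. r t)"
    by (rule sum_over_epochs)
  also have "\<dots> \<le> (\<Sum>k\<in>{1..K}. epoch_regret_bound N eps (len k) (expl k))"
    unfolding r_def using epoch_regret_le by (intro sum_mono) auto
  finally show ?thesis by (simp add: K_def)
qed

end

lemma regret_lmdsee_le:
  assumes "N \<ge> 1" "a > 0" "\<rho> \<ge> 0" "l > 0" "T \<ge> 1"
    and "reward_env N T nu" "slowly_varying N T nu eps" "eps \<ge> 0"
  shows "regret N T nu (lmdsee N a b \<rho> \<gamma> l)
    \<le> (\<Sum>k\<in>{1..epoch_of a \<rho> l T}. epoch_regret_bound N eps (epoch_len a \<rho> l k) (expl_len b \<rho> \<gamma> l k))"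
proof -
  interpret lmdsee_run N a b \<rho> l \<gamma> T nu eps
    using assms by unfold_locales auto
  show ?thesis using regret_le_sum_epoch_regret_bound[OF assms(5)] .
qed

section \<open>Asymptotics for the parameters of the theorem\<close>

lemma nat_ceiling_le: "real (nat \<lceil>y\<rceil>) \<le> max 0 y + 1"
proof (cases "\<lceil>y\<rceil> \<le> 0")
  case False
  then show ?thesis using ceiling_correct[of y] by linarith
qed simp

lemma exploit_cost_le:
  fixes E L y n :: real
  assumes y: "1 \<le> y" "y * y \<le> L" and E: "0 \<le> E" "E \<le> 2 * (y * (y * y))" and n: "0 \<le> n"
  shows "E * (2 * n / sqrt L) \<le> 4 * n * (y * y)"
proof -
  have L: "0 \<le> L" using y mult_ge1_I[of y y] by linarith
  have sqrt_L: "y \<le> sqrt L" using real_sqrt_le_mono[OF y(2)] y(1) by simp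
  then have "0 < sqrt L * y" using y(1) mult_pos_pos[of "sqrt L" y] by linarith
  then have "2 * n / sqrt L \<le> 2 * n / y" using sqrt_L n by (intro divide_left_mono) auto
  then have "E * (2 * n / sqrt L) \<le> 2 * (y * (y * y)) * (2 * n / y)"
    using E y n L by (intro mult_mono divide_nonneg_nonneg) auto
  also have "\<dots> = 4 * n * (y * y)" using y(1) by (simp add: field_simps)
  finally show ?thesis .
qed

text \<open>For epoch \<open>k\<close> put \<open>x = k powr \<rho> * l\<close>, so that \<open>E = \<lceil>x\<rceil>\<close> and
  \<open>L = \<lceil>2 x powr (2/3) ln x\<rceil>\<close>. With \<open>y = x powr (1/3)\<close> the three terms of the bound are of
  order \<open>y\<^sup>2 ln x\<close>, \<open>x / y = y\<^sup>2\<close> and \<open>\<epsilon> x\<^sup>2\<close>.\<close>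
lemma epoch_regret_bound_large:
  fixes x eps :: real
  assumes x: "x \<ge> exp 1" and eps: "eps \<ge> 0"
  shows "epoch_regret_bound N eps (nat \<lceil>x\<rceil>) (nat \<lceil>2 * x powr (2/3) * ln x\<rceil>)
    \<le> real N * x powr (2/3) * (2 * ln x + 5) + 8 * eps * x\<^sup>2"
proof -
  define E L y where "E = nat \<lceil>x\<rceil>" and "L = nat \<lceil>2 * x powr (2/3) * ln x\<rceil>" and "y = x powr (1/3)"
  have x1: "x \<ge> 1" using x exp_ge_add_one_self[of 1] by simp
  have lnx: "ln x \<ge> 1" using x by (subst ln_ge_iff) (auto intro: less_le_trans[OF exp_gt_zero])
  have y: "1 \<le> y" "x powr (2/3) = y * y" "x = y * (y * y)"
    using x1 by (simp_all add: y_def ge_one_powr_ge_zero flip: powr_add)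
  have yy: "1 \<le> y * y" using y(1) by (simp add: mult_ge1_I)
  have L: "2 * (y * y) \<le> real L" "real L \<le> 2 * (y * y) * ln x + 1"
    using mult_left_mono[OF lnx, of "2 * (y * y)"] yy unfolding L_def y(2) by linarith+
  have E: "real E \<le> 2 * x" using x1 unfolding E_def by linarith
  have exploit: "real E * (2 * real N / sqrt (real L)) \<le> 4 * real N * (y * y)"
    using L(1) yy E y by (intro exploit_cost_le) auto
  have "real E * real E \<le> (2 * x) * (2 * x)" using E by (intro mult_mono) auto
  then have drift: "real E * (2 * eps * real E) \<le> 8 * eps * x\<^sup>2"
    using mult_left_mono[OF _ eps, of "real E * real E" "(2 * x) * (2 * x)"]
    by (simp add: power2_eq_square mult_ac)
  have explore: "real N * real L \<le> real N * ((y * y) * (2 * ln x + 1))"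
    using L(2) yy by (intro mult_left_mono) (auto simp: algebra_simps)
  have "L \<noteq> 0" using L(1) yy by auto
  then have "epoch_regret_bound N eps E L
      = real N * real L + real E * (2 * real N / sqrt (real L)) + real E * (2 * eps * real E)"
    by (simp add: epoch_regret_bound_def distrib_left)
  also have "\<dots> \<le> real N * ((y * y) * (2 * ln x + 1)) + 4 * real N * (y * y) + 8 * eps * x\<^sup>2"
    using explore exploit drift by linarith
  also have "\<dots> = real N * x powr (2/3) * (2 * ln x + 5) + 8 * eps * x\<^sup>2"
    unfolding y(2) by (simp add: algebra_simps)
  finally show ?thesis by (simp only: E_def L_def)
qed

lemma epoch_regret_bound_small:
  fixes x eps C :: real
  assumes x: "0 < x" "x < exp 1" and eps: "0 \<le> eps" "eps \<le> C"
  shows "epoch_regret_bound N eps (nat \<lceil>x\<rceil>) (nat \<lceil>2 * x powr (2/3) * ln x\<rceil>)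
    \<le> real N * (2 * exp 1 + 1) + (exp 1 + 1) * (1 + 2 * real N + 2 * C * (exp 1 + 1))"
proof -
  define E L where "E = nat \<lceil>x\<rceil>" and "L = nat \<lceil>2 * x powr (2/3) * ln x\<rceil>"
  have lnx: "ln x \<le> 1" using x by (metis ln_exp ln_less_cancel_iff exp_gt_zero less_imp_le)
  have "x powr (2/3) \<le> exp 1"
  proof (cases "x \<le> 1")
    case True then show ?thesis using x powr_le1[of "2/3" x] exp_ge_add_one_self[of 1] by simp
  next
    case False then show ?thesis using x powr_mono[of "2/3" 1 x] by simp
  qed
  then have "2 * x powr (2/3) * ln x \<le> 2 * exp 1"
    using mult_left_mono[OF lnx, of "2 * x powr (2/3)"] by simp
  then have "max 0 (2 * x powr (2/3) * ln x) \<le> 2 * exp 1" by simp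
  then have L: "real L \<le> 2 * exp 1 + 1"
    unfolding L_def using nat_ceiling_le[of "2 * x powr (2/3) * ln x"] by linarith
  have E: "real E \<le> exp 1 + 1" unfolding E_def using x nat_ceiling_le[of x] by linarith
  have D: "(if L = 0 then 1 else 2 * real N / sqrt (real L) + 2 * eps * real E) \<le> 1 + 2 * N + 2 * C * (exp 1 + 1)"
  proof (cases "L = 0")
    case False
    then have "2 * N / sqrt L \<le> 2 * N" by (simp add: divide_le_eq mult_le_cancel_left1)
    moreover have "2 * eps * E \<le> 2 * C * (exp 1 + 1)" using eps E by (intro mult_mono) auto
    ultimately show ?thesis using False by simp
  qed (use eps in simp)
  have "E * (if L = 0 then 1 else 2 * real N / sqrt (real L) + 2 * eps * real E)
      \<le> (exp 1 + 1) * (1 + 2 * real N + 2 * C * (exp 1 + 1))"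
    using E D eps by (intro mult_mono) auto
  moreover have "real N * L \<le> real N * (2 * exp 1 + 1)" using L by (intro mult_left_mono) auto
  ultimately have "epoch_regret_bound N eps E L \<le> real N * (2 * exp 1 + 1) + (exp 1 + 1) * (1 + 2 * real N + 2 * C * (exp 1 + 1))"
    unfolding epoch_regret_bound_def by linarith
  then show ?thesis by (simp only: E_def L_def)
qed

lemma epoch_regret_bound_le:
  fixes x X \<Lambda> eps C :: real
  assumes x: "0 < x" "x \<le> X" "ln x \<le> \<Lambda>" "0 \<le> \<Lambda>" and eps: "0 \<le> eps" "eps \<le> C"
  shows "epoch_regret_bound N eps (nat \<lceil>x\<rceil>) (nat \<lceil>2 * x powr (2/3) * ln x\<rceil>)
    \<le> real N * (2 * exp 1 + 1) + (exp 1 + 1) * (1 + 2 * real N + 2 * C * (exp 1 + 1))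
      + real N * X powr (2/3) * (2 * \<Lambda> + 5) + 8 * eps * X\<^sup>2"
proof (cases "x < exp 1")
  case True
  have "0 \<le> real N * X powr (2/3) * (2 * \<Lambda> + 5) + 8 * eps * X\<^sup>2" using x eps by simp
  then show ?thesis using epoch_regret_bound_small[OF x(1) True eps, where N = N] by linarith
next
  case False
  have "x powr (2/3) * (2 * ln x + 5) \<le> X powr (2/3) * (2 * \<Lambda> + 5)"
  proof (rule mult_mono)
    show "0 \<le> 2 * ln x + 5" using False x(1) ln_ge_iff[of x 1] by auto
  qed (use x in \<open>auto intro: powr_mono2\<close>)
  then have "real N * x powr (2/3) * (2 * ln x + 5) \<le> real N * X powr (2/3) * (2 * \<Lambda> + 5)"
    by (simp add: mult.assoc mult_left_mono)
  moreover have "8 * eps * x\<^sup>2 \<le> 8 * eps * X\<^sup>2" using x eps by (intro mult_left_mono power_mono) auto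
  moreover have "0 \<le> real N * (2 * exp 1 + 1) + (exp 1 + 1) * (1 + 2 * real N + 2 * C * (exp 1 + 1))"
    using eps by simp
  ultimately show ?thesis using epoch_regret_bound_large[of x eps N] False eps by linarith
qed

lemma powr_le_of_le_mult_powr:
  fixes K c T q e :: real
  assumes "0 \<le> K" "K \<le> c * T powr q" "0 < c" "0 < T" "0 \<le> e"
  shows "K powr e \<le> c powr e * T powr (q * e)"
proof -
  have "K powr e \<le> (c * T powr q) powr e" using assms by (intro powr_mono2) auto
  then show ?thesis using assms by (simp add: powr_mult powr_powr)
qed

text \<open>With \<open>K \<approx> T powr (1 / (1 + \<rho>))\<close> epochs, the exploration cost \<open>K powr (1 + 2\<rho>/3)\<close>
  is exactly \<open>T powr p\<close>, and the drift cost \<open>T powr -\<kappa> * K powr (1 + 2\<rho>)\<close> is at most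
  \<open>T powr p\<close> exactly when \<open>4\<rho> \<le> 3\<kappa>(1 + \<rho>)\<close>.\<close>
lemma epoch_exponents:
  fixes \<rho> \<kappa> :: real
  assumes "0 \<le> \<rho>" "4 * \<rho> \<le> 3 * \<kappa> * (1 + \<rho>)"
  defines "p \<equiv> (3 + 2 * \<rho>) / (3 + 3 * \<rho>)"
  shows "1 / (1 + \<rho>) \<le> p" "1 / (1 + \<rho>) * (1 + 2 * \<rho> / 3) = p" "1 / (1 + \<rho>) * (1 + 2 * \<rho>) - \<kappa> \<le> p"
proof -
  show "1 / (1 + \<rho>) \<le> p" "1 / (1 + \<rho>) * (1 + 2 * \<rho> / 3) = p"
    using assms(1) by (simp_all add: p_def field_simps)
  have "1 / (1 + \<rho>) * (1 + 2 * \<rho>) = (3 + 6 * \<rho>) / (3 + 3 * \<rho>)"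
    using assms(1) by (simp add: divide_simps) (simp add: algebra_simps)
  moreover have "(3 + 6 * \<rho>) / (3 + 3 * \<rho>) = p + 4 * \<rho> / (3 + 3 * \<rho>)"
    by (simp add: p_def add_divide_distrib[symmetric])
  moreover have "4 * \<rho> / (3 + 3 * \<rho>) \<le> \<kappa>" using assms by (simp add: divide_le_eq algebra_simps)
  ultimately show "1 / (1 + \<rho>) * (1 + 2 * \<rho>) - \<kappa> \<le> p" by linarith
qed

lemma epoch_sum_growth:
  fixes K T c \<rho> \<kappa> M0 A B C :: real
  assumes K: "1 \<le> K" "K \<le> c * T powr (1 / (1 + \<rho>))" and T: "exp 1 \<le> T"
    and \<rho>: "0 \<le> \<rho>" "4 * \<rho> \<le> 3 * \<kappa> * (1 + \<rho>)"
    and const_pos: "0 < c" "0 \<le> M0" "0 \<le> A" "0 \<le> B" "0 \<le> C"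
  defines "p \<equiv> (3 + 2 * \<rho>) / (3 + 3 * \<rho>)"
  shows "K * M0 + A * (\<rho> * ln T + B) * K powr (1 + 2 * \<rho> / 3) + C * T powr (- \<kappa>) * K powr (1 + 2 * \<rho>)
    \<le> (c * M0 + A * (\<rho> + B) * c powr (1 + 2 * \<rho> / 3) + C * c powr (1 + 2 * \<rho>)) * T powr p * ln T"
proof -
  define q where "q = 1 / (1 + \<rho>)"
  have T1: "1 \<le> T" using T exp_ge_add_one_self[of 1] by linarith
  then have T0: "0 < T" by simp
  have lnT: "1 \<le> ln T" using T T0 by (simp add: ln_ge_iff)
  have q: "0 < q" using \<rho> by (simp add: q_def)
  note exps = epoch_exponents[OF \<rho>, folded p_def q_def]
  have Tp: "1 \<le> T powr p" using T1 q exps(1) by (intro ge_one_powr_ge_zero) auto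
  have le_ln: "z \<le> z * ln T" if "0 \<le> z" for z using mult_left_mono[OF lnT that] by simp
  have K_pow: "K powr e \<le> c powr e * T powr (q * e)" if "0 \<le> e" for e
    using powr_le_of_le_mult_powr[of K c T q e] K const_pos(1) T0 that by (simp add: q_def)
  have "T powr q \<le> T powr p" using exps(1) T1 by (intro powr_mono) auto
  then have "K \<le> c * T powr p" using K(2) const_pos(1) unfolding q_def[symmetric]
    by (meson less_imp_le mult_left_mono order_trans)
  then have "K * M0 \<le> c * T powr p * M0" using const_pos(2) by (rule mult_right_mono)
  then have term1: "K * M0 \<le> c * M0 * T powr p * ln T"
    using le_ln[of "c * M0 * T powr p"] const_pos by (simp add: mult_ac)
  have "\<rho> * ln T + B \<le> (\<rho> + B) * ln T" using le_ln[of B] const_pos(4) \<rho>(1) by (simp add: algebra_simps)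
  then have term2: "A * (\<rho> * ln T + B) * K powr (1 + 2 * \<rho> / 3)
      \<le> A * ((\<rho> + B) * ln T) * (c powr (1 + 2 * \<rho> / 3) * T powr p)"
    using K_pow[of "1 + 2 * \<rho> / 3"] exps(2) const_pos \<rho>(1) lnT
    by (intro mult_mono) auto
  have "T powr (- \<kappa>) * K powr (1 + 2 * \<rho>) \<le> T powr (- \<kappa>) * (c powr (1 + 2 * \<rho>) * T powr (q * (1 + 2 * \<rho>)))"
    using K_pow[of "1 + 2 * \<rho>"] \<rho>(1) by (intro mult_left_mono) auto
  also have "\<dots> = c powr (1 + 2 * \<rho>) * T powr (q * (1 + 2 * \<rho>) - \<kappa>)"
    by (simp add: powr_add[symmetric] algebra_simps)
  also have "\<dots> \<le> c powr (1 + 2 * \<rho>) * T powr p"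
    using exps(3) T1 by (intro mult_left_mono powr_mono) auto
  also have "\<dots> \<le> c powr (1 + 2 * \<rho>) * T powr p * ln T" by (intro le_ln) simp
  finally have term3: "C * T powr (- \<kappa>) * K powr (1 + 2 * \<rho>) \<le> C * (c powr (1 + 2 * \<rho>) * T powr p * ln T)"
    using const_pos(5) by (simp add: mult.assoc mult_left_mono)
  from term1 term2 term3 show ?thesis by (simp add: algebra_simps)
qed

lemma regret_lmdsee_le_epoch_count:
  fixes N T :: nat and \<rho> l eps C :: real
  assumes N: "N \<ge> 1" and \<rho>: "\<rho> \<ge> 0" and l: "l > 0" and T: "T \<ge> 1"
    and env: "reward_env N T nu" and slow: "slowly_varying N T nu eps" and eps: "0 \<le> eps" "eps \<le> C"
  defines "\<gamma> \<equiv> \<lambda>k::nat. 2 * (real k powr \<rho> * l) powr (2/3)"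
    and "K \<equiv> epoch_of 1 \<rho> l T"
  defines "X \<equiv> real K powr \<rho> * l"
  shows "regret N T nu (lmdsee N 1 1 \<rho> \<gamma> l)
    \<le> real K * (real N * (2 * exp 1 + 1) + (exp 1 + 1) * (1 + 2 * real N + 2 * C * (exp 1 + 1))
      + real N * X powr (2/3) * (2 * (\<rho> * ln T + \<bar>ln l\<bar>) + 5) + 8 * eps * X\<^sup>2)"
    (is "_ \<le> real K * ?Y")
proof -
  interpret lmdsee_schedule N 1 1 \<rho> l \<gamma> using N \<rho> l by unfold_locales auto
  have K: "1 \<le> K" "K \<le> T" using epoch_of_bounds(1)[OF T] epoch_of_le_self[OF T] by (simp_all add: K_def)
  have "epoch_regret_bound N eps (len k) (expl k) \<le> ?Y" if k: "k \<in> {1..K}" for k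
  proof -
    define x where "x = real k powr \<rho> * l"
    have x: "0 < x" "x \<le> X" using k l \<rho> by (auto simp: x_def X_def intro!: mult_right_mono powr_mono2)
    have "ln x = \<rho> * ln k + ln l" using k l by (simp add: x_def ln_mult ln_powr)
    also have "\<dots> \<le> \<rho> * ln T + \<bar>ln l\<bar>" using k K \<rho> by (auto intro!: add_mono mult_left_mono)
    finally have ln_x: "ln x \<le> \<rho> * ln T + \<bar>ln l\<bar>" .
    have "0 \<le> \<rho> * ln T + \<bar>ln l\<bar>" using \<rho> T by simp
    moreover have "len k = nat \<lceil>x\<rceil>" "expl k = nat \<lceil>2 * x powr (2/3) * ln x\<rceil>"
      by (simp_all add: epoch_len_def expl_len_def \<gamma>_def x_def)
    ultimately show ?thesis using epoch_regret_bound_le[OF x ln_x _ eps, of N] by simp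
  qed
  then have "(\<Sum>k\<in>{1..K}. epoch_regret_bound N eps (len k) (expl k)) \<le> (\<Sum>k\<in>{1..K}. ?Y)"
    by (rule sum_mono)
  moreover have "regret N T nu (lmdsee N 1 1 \<rho> \<gamma> l) \<le> (\<Sum>k\<in>{1..K}. epoch_regret_bound N eps (len k) (expl k))"
    unfolding K_def by (rule regret_lmdsee_le[OF N zero_less_one \<rho> l T env slow eps(1)])
  ultimately show ?thesis by simp
qed

lemma epoch_count_cost_expand:
  fixes K \<rho> l eps Y0 W :: real
  assumes "1 \<le> K" "0 < l"
  shows "K * (Y0 + N * (K powr \<rho> * l) powr (2/3) * (2 * W + 5) + 8 * eps * (K powr \<rho> * l)\<^sup>2)
    = K * Y0 + (2 * N * l powr (2/3)) * (W + 5/2) * K powr (1 + 2 * \<rho> / 3)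
      + 8 * l\<^sup>2 * eps * K powr (1 + 2 * \<rho>)"
proof -
  have "(K powr \<rho> * l) powr (2/3) = K powr (2 * \<rho> / 3) * l powr (2/3)"
    using assms by (simp add: powr_mult powr_powr mult_ac)
  moreover have "(K powr \<rho> * l)\<^sup>2 = K powr (2 * \<rho>) * l\<^sup>2"
    using assms by (simp add: power_mult_distrib powr_power)
  moreover have "K powr (1 + e) = K * K powr e" for e using assms by (simp add: powr_add)
  ultimately show ?thesis by (simp only:) (simp add: algebra_simps)
qed

lemma lmdsee_regret_bound:
  fixes N :: nat and \<rho> \<kappa> C l :: real
  assumes N: "N \<ge> 1" and \<rho>: "\<rho> > 0" and l: "l > 0" and C: "C > 0"
    and \<kappa>: "4 * \<rho> \<le> 3 * \<kappa> * (1 + \<rho>)"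
  defines "\<gamma> \<equiv> \<lambda>k::nat. 2 * (real k powr \<rho> * l) powr (2/3)"
  shows "\<exists>R. \<forall>T\<ge>3. \<forall>nu. reward_env N T nu \<and> slowly_varying N T nu (C * real T powr (- \<kappa>)) \<longrightarrow>
    regret N T nu (lmdsee N 1 1 \<rho> \<gamma> l) \<le> R * real T powr ((3 + 2 * \<rho>) / (3 + 3 * \<rho>)) * ln (real T)"
proof -
  define c where "c = 1 + 2 / (1 * l) powr (1 / (1 + \<rho>))"
  define M0 where "M0 = real N * (2 * exp 1 + 1) + (exp 1 + 1) * (1 + 2 * real N + 2 * C * (exp 1 + 1))"
  define A B where "A = 2 * N * l powr (2/3)" and "B = \<bar>ln l\<bar> + 5/2"
  define R where "R = c * M0 + A * (\<rho> + B) * c powr (1 + 2 * \<rho> / 3) + 8 * l\<^sup>2 * C * c powr (1 + 2 * \<rho>)"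
  have "regret N T nu (lmdsee N 1 1 \<rho> \<gamma> l) \<le> R * real T powr ((3 + 2 * \<rho>) / (3 + 3 * \<rho>)) * ln (real T)"
    if T: "T \<ge> 3" and env: "reward_env N T nu" and slow: "slowly_varying N T nu (C * real T powr (- \<kappa>))" for T nu
  proof -
    interpret lmdsee_schedule N 1 1 \<rho> l \<gamma> using N \<rho> l by unfold_locales auto
    define eps K where "eps = C * real T powr (- \<kappa>)" and "K = epoch T"
    have "0 < 3 * \<kappa> * (1 + \<rho>)" using \<kappa> \<rho> by linarith
    then have "0 \<le> \<kappa>" using \<rho> by (simp add: zero_less_mult_iff)
    then have "real T powr (- \<kappa>) \<le> real T powr 0" using T by (intro powr_mono) auto
    then have eps: "0 \<le> eps" "eps \<le> C" using C T by (simp_all add: eps_def)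
    have K: "1 \<le> real K" "real K \<le> c * real T powr (1 / (1 + \<rho>))"
      using epoch_of_bounds(1)[of T] epoch_of_le[of T] T by (simp_all add: K_def c_def)
    have "exp 1 \<le> real T" using T exp_le by linarith
    note growth = epoch_sum_growth[OF K this _ \<kappa>, of M0 A B "8 * l\<^sup>2 * C"]
    have "regret N T nu (lmdsee N 1 1 \<rho> \<gamma> l)
        \<le> real K * (M0 + N * (real K powr \<rho> * l) powr (2/3) * (2 * (\<rho> * ln T + \<bar>ln l\<bar>) + 5)
          + 8 * eps * (real K powr \<rho> * l)\<^sup>2)"
      using regret_lmdsee_le_epoch_count[OF N _ l _ env slow[folded eps_def] eps] \<rho> T
      by (simp add: K_def M0_def \<gamma>_def)
    also have "\<dots> = real K * M0 + A * (\<rho> * ln T + B) * real K powr (1 + 2 * \<rho> / 3)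
        + 8 * l\<^sup>2 * eps * real K powr (1 + 2 * \<rho>)"
      unfolding epoch_count_cost_expand[OF K(1) l] by (simp add: A_def B_def add.assoc)
    also have "\<dots> = real K * M0 + A * (\<rho> * ln T + B) * real K powr (1 + 2 * \<rho> / 3)
        + 8 * l\<^sup>2 * C * real T powr (- \<kappa>) * real K powr (1 + 2 * \<rho>)"
      by (simp add: eps_def mult_ac)
    also have "\<dots> \<le> R * real T powr ((3 + 2 * \<rho>) / (3 + 3 * \<rho>)) * ln (real T)"
      unfolding R_def using growth \<rho> l C by (simp add: c_def M0_def A_def B_def add_pos_nonneg)
    finally show ?thesis .
  qed
  then show ?thesis by blast
qed

theorem theorem2:
  fixes N :: nat and \<kappa> \<kappa>max C l :: real
  assumes N_pos: "N \<ge> 1"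
    and kappa_pos: "\<kappa> > 0" and C_pos: "C > 0"
    and kmax: "0 < \<kappa>max" "\<kappa>max < 4/3"
    and l_pos: "l > 0"
  defines "\<rho> \<equiv> 3 * min \<kappa> \<kappa>max / (4 - 3 * min \<kappa> \<kappa>max)"
    and "\<gamma> \<equiv> (\<lambda>k::nat. 2 * (real k powr (3 * min \<kappa> \<kappa>max / (4 - 3 * min \<kappa> \<kappa>max)) * l) powr (2/3))"
  assumes l_ok: "\<forall>k\<ge>1. N * expl_len 1 \<rho> \<gamma> l k \<le> epoch_len 1 \<rho> l k"
  shows "\<exists>K T0. \<forall>T\<ge>T0. \<forall>nu. reward_env N T nu \<and> slowly_varying N T nu (C * real T powr (-\<kappa>)) \<longrightarrow>
           regret N T nu (lmdsee N 1 1 \<rho> \<gamma> l) \<le> K * real T powr ((3 + 2*\<rho>) / (3 + 3*\<rho>)) * ln (real T)"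
proof -
  define \<kappa>' where "\<kappa>' = min \<kappa> \<kappa>max"
  have \<kappa>': "0 < \<kappa>'" "\<kappa>' < 4/3" "\<kappa>' \<le> \<kappa>" using kappa_pos kmax by (auto simp: \<kappa>'_def)
  have \<rho>_pos: "\<rho> > 0" using \<kappa>' by (simp add: \<rho>_def \<kappa>'_def)
  have "4 * \<rho> = 12 * \<kappa>' / (4 - 3 * \<kappa>')" "3 * \<kappa> * (1 + \<rho>) = 12 * \<kappa> / (4 - 3 * \<kappa>')"
    using \<kappa>' by (simp_all add: \<rho>_def \<kappa>'_def field_simps)
  then have "4 * \<rho> \<le> 3 * \<kappa> * (1 + \<rho>)" using \<kappa>' by (simp add: divide_right_mono)
  from lmdsee_regret_bound[OF N_pos \<rho>_pos l_pos C_pos this] obtain R where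
    "\<forall>T\<ge>3. \<forall>nu. reward_env N T nu \<and> slowly_varying N T nu (C * real T powr (- \<kappa>)) \<longrightarrow>
      regret N T nu (lmdsee N 1 1 \<rho> \<gamma> l) \<le> R * real T powr ((3 + 2 * \<rho>) / (3 + 3 * \<rho>)) * ln (real T)"
    unfolding \<gamma>_def \<rho>_def by blast
  then show ?thesis by blast
qed

end
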